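(* Let $\sigma_X>0$, $R>0$, $R_c\ge0$, $P\ge0$, and write $a:=\sqrt{1-e^{-2R}}$, $b:=\sqrt{1-e^{-2(R+R_c)}}$, $e:=e^{-2(R+R_c)}$. Define $$\varsigma(R,R_c):=\frac{\sigma_X\big(\sqrt{b^2+4a^2e}-b\big)}{2ae},\qquad \varsigma'(R,R_c):=\frac{\sqrt{1+4\beta_1\beta_2'}-1}{2\beta_1},$$ with $\beta_1=\frac{ae}{\sigma_X b}$ and $\beta_2'=\sigma_X a\big(1+\frac{e}{b}\big)$, and let $\sigma(R,R_c,P):=\frac{\sqrt{1+4\beta_1\beta_2}-1}{2\beta_1}$ with $\beta_2=\sigma_X\sqrt{(1-e^{-2R})(1-e^{-2(R+R_c+P)})}+\frac{\sigma_X a e}{b}$. Then $$\varsigma(R,R_c)\le\sigma(R,R_c,P)\le\varsigma'(R,R_c)<\sigma_X.$$ Moreover, if $\underline D(R,R_c,P|\mathcal N(\mu_X,\sigma_X^2))=\sigma_X^2+\sigma^2(P)-2\sigma_X\sigma(P)\xi(R,R_c)$, then $\sigma(P)\ge\varsigma(R,R_c)$.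
   Context: All logarithms are natural. $\xi(R,R_c):=\sqrt{(1-e^{-2R})(1-e^{-2(R+R_c)})}$. For $\sigma\in(0,\sigma_X]$, $\psi(\sigma):=\log\frac{\sigma_X}{\sigma}+\frac{\sigma^2-\sigma_X^2}{2\sigma_X^2}$ (strictly decreasing, $\to\infty$ as $\sigma\to0$, $\psi(\sigma_X)=0$), and $\sigma(P)$ is the unique $\sigma\in(0,\sigma_X]$ with $\psi(\sigma)=P$. $\underline D(R,R_c,P|\mathcal N(\mu_X,\sigma_X^2)):=\min_{\sigma_{\hat X}\in[\sigma(P),\sigma_X]}\big(\sigma_X^2+\sigma_{\hat X}^2-2\sigma_X\sigma_{\hat X}\sqrt{(1-e^{-2R})(1-e^{-2(R+R_c+P-\psi(\sigma_{\hat X}))})}\big)$. *)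

theory Defs
  imports Complex_Main
begin

definition xi :: "real \<Rightarrow> real \<Rightarrow> real" where
  "xi R Rc = sqrt ((1 - exp (-2*R)) * (1 - exp (-2*(R+Rc))))"

definition psi :: "real \<Rightarrow> real \<Rightarrow> real" where
  "psi \<sigma>X \<sigma> = ln (\<sigma>X / \<sigma>) + (\<sigma>^2 - \<sigma>X^2) / (2*\<sigma>X^2)"

definition sigmaP :: "real \<Rightarrow> real \<Rightarrow> real" where
  "sigmaP \<sigma>X P = (THE \<sigma>. 0 < \<sigma> \<and> \<sigma> \<le> \<sigma>X \<and> psi \<sigma>X \<sigma> = P)"

text \<open>Lower bound D(R,Rc,P | N(mu_X, sigma_X^2)); it does not depend on mu_X.
  The minimum over the compact interval is written as an infimum.\<close>
definition Dlow :: "real \<Rightarrow> real \<Rightarrow> real \<Rightarrow> real \<Rightarrow> real" where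
  "Dlow \<sigma>X R Rc P = Inf ((\<lambda>s. \<sigma>X^2 + s^2 - 2*\<sigma>X*s*
      sqrt ((1 - exp (-2*R)) * (1 - exp (-2*(R + Rc + P - psi \<sigma>X s)))))
      ` {sigmaP \<sigma>X P .. \<sigma>X})"

end

theory Submission
  imports Defs
begin

text \<open>The three quantities \<open>\<varsigma> \<le> \<sigma>(R,R\<^sub>c,P) \<le> \<varsigma>'\<close> are the positive roots of
  \<open>\<beta>1 s\<^sup>2 + s = x\<close> for \<open>x = \<sigma>\<^sub>X a/b \<le> \<beta>2 \<le> \<beta>2'\<close>, and this root increases with \<open>x\<close>;
  the ordering of the \<open>x\<close>'s is \<open>b \<le> sqrt (1 - exp (-2(R+R\<^sub>c+P))) \<le> 1\<close>.
  For the last claim: at \<open>s = \<sigma>(P)\<close>, where \<open>\<psi>(s) = P\<close>, the objective minimised in \<open>D\<close> has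
  derivative \<open>2 (\<beta>1 s\<^sup>2 + s - \<sigma>\<^sub>X a/b)\<close>. If the minimum over \<open>[\<sigma>(P), \<sigma>\<^sub>X]\<close> is attained at
  the left endpoint \<open>\<sigma>(P)\<close>, this derivative is nonnegative, i.e. \<open>\<sigma>(P) \<ge> \<varsigma>\<close>.\<close>

lemma sqrt_less_iff_less_square:
  fixes y z :: real
  assumes "0 \<le> y"
  shows "sqrt z < y \<longleftrightarrow> z < y^2"
  using assms by (metis abs_of_nonneg real_sqrt_abs real_sqrt_less_iff)

lemma less_sqrt_iff_square_less:
  fixes y z :: real
  assumes "0 \<le> y"
  shows "y < sqrt z \<longleftrightarrow> y^2 < z"
  using assms by (metis abs_of_nonneg real_sqrt_abs real_sqrt_less_iff)

text \<open>The positive root of \<open>c s\<^sup>2 + s = x\<close>.\<close>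
definition pos_root :: "real \<Rightarrow> real \<Rightarrow> real" where
  "pos_root c x = (sqrt (1 + 4*c*x) - 1) / (2*c)"

lemma pos_root_mono:
  assumes "0 < c" "x \<le> y"
  shows "pos_root c x \<le> pos_root c y"
  unfolding pos_root_def using assms by (intro divide_right_mono diff_right_mono real_sqrt_le_mono) auto

lemma pos_root_less_iff:
  assumes "0 < c" "0 \<le> t"
  shows "pos_root c x < t \<longleftrightarrow> x < c*t^2 + t"
proof -
  have "pos_root c x < t \<longleftrightarrow> sqrt (1 + 4*c*x) < 2*c*t + 1"
    unfolding pos_root_def using assms by (simp add: field_simps)
  also have "\<dots> \<longleftrightarrow> 1 + 4*c*x < (2*c*t + 1)^2"
    using assms by (intro sqrt_less_iff_less_square) simp
  also have "\<dots> \<longleftrightarrow> (4*c)*x < (4*c)*(c*t^2 + t)"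
    by (simp add: power2_eq_square algebra_simps)
  also have "\<dots> \<longleftrightarrow> x < c*t^2 + t"
    using assms by simp
  finally show ?thesis .
qed

lemma less_pos_root_iff:
  assumes "0 < c" "0 \<le> s"
  shows "s < pos_root c x \<longleftrightarrow> c*s^2 + s < x"
proof -
  have "s < pos_root c x \<longleftrightarrow> 2*c*s + 1 < sqrt (1 + 4*c*x)"
    unfolding pos_root_def using assms by (simp add: field_simps)
  also have "\<dots> \<longleftrightarrow> (2*c*s + 1)^2 < 1 + 4*c*x"
    using assms by (intro less_sqrt_iff_square_less) simp
  also have "\<dots> \<longleftrightarrow> (4*c)*(c*s^2 + s) < (4*c)*x"
    by (simp add: power2_eq_square algebra_simps)
  also have "\<dots> \<longleftrightarrow> c*s^2 + s < x"
    using assms by simp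
  finally show ?thesis .
qed

lemma pos_root_eq_quadratic_root:
  assumes "0 < \<sigma>" "0 < a" "0 < b" "0 < e"
  shows "\<sigma> * (sqrt (b^2 + 4*a^2*e) - b) / (2*a*e) = pos_root (a*e/(\<sigma>*b)) (\<sigma>*a/b)"
proof -
  have "1 + 4*(a*e/(\<sigma>*b))*(\<sigma>*a/b) = (b^2 + 4*a^2*e) / b^2"
    using assms by (simp add: field_simps power2_eq_square)
  then have "sqrt (1 + 4*(a*e/(\<sigma>*b))*(\<sigma>*a/b)) = sqrt (b^2 + 4*a^2*e) / b"
    using assms by (simp add: real_sqrt_divide)
  then show ?thesis
    unfolding pos_root_def using assms by (simp add: field_simps)
qed

lemma DERIV_nonneg_at_left_endpoint_min:
  fixes f :: "real \<Rightarrow> real"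
  assumes "DERIV f x :> D" "x < y" "\<And>s. s \<in> {x..y} \<Longrightarrow> f x \<le> f s"
  shows "0 \<le> D"
proof (rule ccontr)
  assume "\<not> 0 \<le> D"
  then obtain d where d: "0 < d" "\<And>h. 0 < h \<Longrightarrow> h < d \<Longrightarrow> f (x + h) < f x"
    using DERIV_neg_dec_right[OF assms(1)] by (metis linorder_not_le)
  define h where "h = min (d/2) (y - x)"
  have "0 < h" "h < d" "x + h \<in> {x..y}" using d assms(2) by (auto simp: h_def)
  with d(2) assms(3) show False by (meson not_le)
qed

lemma has_real_derivative_psi:
  assumes "0 < \<sigma>" "0 < s"
  shows "(psi \<sigma> has_real_derivative s/\<sigma>^2 - 1/s) (at s)"
  unfolding psi_def[abs_def] using assms
  by (auto intro!: derivative_eq_intros simp: field_simps power2_eq_square)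

lemma psi_strict_decreasing:
  assumes "0 < s" "s < t" "t \<le> \<sigma>"
  shows "psi \<sigma> t < psi \<sigma> s"
proof (rule DERIV_neg_imp_decreasing_open[OF assms(2)])
  fix x assume x: "s < x" "x < t"
  have "x/\<sigma>^2 - 1/x < 0"
    using x assms by (simp add: field_simps power2_eq_square mult_strict_mono)
  moreover have "(psi \<sigma> has_real_derivative x/\<sigma>^2 - 1/x) (at x)"
    using x assms by (intro has_real_derivative_psi) auto
  ultimately show "\<exists>y. (psi \<sigma> has_real_derivative y) (at x) \<and> y < 0"
    by blast
next
  show "continuous_on {s..t} (psi \<sigma>)"
    using assms unfolding psi_def[abs_def] by (auto intro!: continuous_intros)
qed

lemma psi_self [simp]: "psi \<sigma> \<sigma> = 0"
  unfolding psi_def by simp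

lemma sigmaP_solves_psi:
  assumes "0 < \<sigma>" "0 \<le> P"
  shows "0 < sigmaP \<sigma> P" "sigmaP \<sigma> P \<le> \<sigma>" "psi \<sigma> (sigmaP \<sigma> P) = P"
proof -
  define s0 where "s0 = \<sigma> / exp (P+1)"
  have s0: "0 < s0" "s0 \<le> \<sigma>"
    using assms unfolding s0_def by (auto simp: divide_le_eq)
  have "ln (\<sigma>/s0) = P + 1"
    using assms by (simp add: s0_def)
  then have "psi \<sigma> s0 = P + 1 + (s0^2 - \<sigma>^2)/(2*\<sigma>^2)"
    unfolding psi_def by simp
  moreover have "(s0^2 - \<sigma>^2)/(2*\<sigma>^2) \<ge> -1/2"
    using assms by (simp add: field_simps)
  ultimately have "P \<le> psi \<sigma> s0" by linarith
  moreover have "continuous_on {s0..\<sigma>} (psi \<sigma>)"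
    using s0 unfolding psi_def[abs_def] by (auto intro!: continuous_intros)
  ultimately obtain x where x: "s0 \<le> x" "x \<le> \<sigma>" "psi \<sigma> x = P"
    using IVT2'[of "psi \<sigma>" \<sigma> P s0] s0 assms by auto
  have "y = x" if "0 < y \<and> y \<le> \<sigma> \<and> psi \<sigma> y = P" for y
    using psi_strict_decreasing[of y x \<sigma>] psi_strict_decreasing[of x y \<sigma>] that x s0
    by (cases y x rule: linorder_cases) auto
  then have "sigmaP \<sigma> P = x"
    unfolding sigmaP_def using x s0 by (intro the_equality) auto
  with x s0 show "0 < sigmaP \<sigma> P" "sigmaP \<sigma> P \<le> \<sigma>" "psi \<sigma> (sigmaP \<sigma> P) = P"
    by auto
qed

definition dist_objective :: "real \<Rightarrow> real \<Rightarrow> real \<Rightarrow> real \<Rightarrow> real \<Rightarrow> real" where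
  "dist_objective \<sigma>X R Rc P s = \<sigma>X^2 + s^2 -
     2*\<sigma>X*s*sqrt ((1 - exp (-2*R)) * (1 - exp (-2*(R + Rc + P - psi \<sigma>X s))))"

lemma Dlow_eq_Inf_dist_objective:
  "Dlow \<sigma>X R Rc P = Inf (dist_objective \<sigma>X R Rc P ` {sigmaP \<sigma>X P .. \<sigma>X})"
  unfolding Dlow_def dist_objective_def ..

lemma dist_objective_nonneg:
  assumes "0 \<le> \<sigma>X" "0 \<le> R" "0 \<le> s"
  shows "0 \<le> dist_objective \<sigma>X R Rc P s"
proof -
  define A where "A = 1 - exp (-2*R)"
  have "A * (1 - exp (-2*(R + Rc + P - psi \<sigma>X s))) \<le> 1"
    using assms(2) unfolding A_def
    by (smt (verit) exp_gt_zero exp_le_one_iff mult_left_le mult_nonneg_nonneg)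
  then have "\<sigma>X*s*sqrt (A * (1 - exp (-2*(R + Rc + P - psi \<sigma>X s)))) \<le> \<sigma>X*s"
    using assms by (intro mult_left_le) auto
  moreover have "0 \<le> (\<sigma>X - s)^2" by simp
  ultimately show ?thesis
    unfolding dist_objective_def A_def[symmetric] by (simp add: power2_eq_square algebra_simps)
qed

lemma has_real_derivative_dist_objective:
  assumes "0 < \<sigma>X" "0 < R" "0 \<le> Rc" "0 < s" "psi \<sigma>X s = P"
    and a: "a = sqrt (1 - exp (-2*R))" and b: "b = sqrt (1 - exp (-2*(R+Rc)))"
    and e: "e = exp (-2*(R+Rc))"
  shows "(dist_objective \<sigma>X R Rc P has_real_derivative
           2 * (a*e/(\<sigma>X*b) * s^2 + s - \<sigma>X*a/b)) (at s)"
proof -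
  have a2: "a^2 = 1 - exp (-2*R)" and b2: "1 - b^2 = e" and ab: "0 < a" "0 < b"
    using assms by auto
  define g where "g t = (1 - exp (-2*R)) * (1 - exp (-2*(R + Rc + P - psi \<sigma>X t)))" for t
  define Dg where "Dg = - (a^2) * (2*e*(s/\<sigma>X^2 - 1/s))"
  have "g s = (1 - exp (-2*R)) * (1 - e)"
    unfolding g_def e using assms(5) by simp
  also have "\<dots> = a^2 * b^2"
    using a2 b2 by simp
  finally have g_s: "0 < g s" "sqrt (g s) = a*b"
    using ab by (simp_all add: real_sqrt_mult)
  have "(g has_real_derivative Dg) (at s)"
    unfolding g_def Dg_def a2[symmetric]
    by (rule derivative_eq_intros has_real_derivative_psi refl assms(1,4))+
       (simp add: assms(5) e)
  then have dsqrt: "((\<lambda>t. sqrt (g t)) has_real_derivative inverse (a*b) / 2 * Dg) (at s)"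
    using DERIV_chain2[where g=g, OF DERIV_real_sqrt[OF g_s(1)]] unfolding g_s(2) by blast
  have deriv: "(dist_objective \<sigma>X R Rc P has_real_derivative
                2*s - 2*\<sigma>X*(a*b + s*(inverse (a*b) / 2 * Dg))) (at s)"
    unfolding dist_objective_def[abs_def] g_def[symmetric]
    by (rule derivative_eq_intros dsqrt refl)+ (simp add: g_s(2) algebra_simps)
  have derivative_eq: "2*s - 2*\<sigma>X*(a*b + s*(inverse (a*b) / 2 * Dg))
      = 2 * (a*e/(\<sigma>X*b) * s^2 + s - \<sigma>X*a/b)"
    using assms(1,4) ab unfolding Dg_def b2[symmetric] by (simp add: field_simps power2_eq_square)
  show ?thesis using deriv unfolding derivative_eq .
qed

lemma rate_constants:
  assumes "0 < R" "0 \<le> Rc"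
    and a: "a = sqrt (1 - exp (-2*R))" and b: "b = sqrt (1 - exp (-2*(R+Rc)))"
    and e: "e = exp (-2*(R+Rc))"
  shows "0 < a" "0 < b" "0 < e" "b < 1" "b^2 = 1 - e"
  using assms by auto

lemma beta2_bounds:
  assumes "0 < \<sigma>X" "0 < R" "0 \<le> Rc" "0 \<le> P"
    and a: "a = sqrt (1 - exp (-2*R))" and b: "b = sqrt (1 - exp (-2*(R+Rc)))"
    and e: "e = exp (-2*(R+Rc))"
  defines "\<beta>2 \<equiv> \<sigma>X * sqrt ((1 - exp (-2*R)) * (1 - exp (-2*(R+Rc+P)))) + \<sigma>X*a*e/b"
  shows "\<sigma>X*a/b \<le> \<beta>2" "\<beta>2 \<le> \<sigma>X*a*(1 + e/b)" "\<sigma>X*a*(1 + e/b) < a*e/(\<sigma>X*b) * \<sigma>X^2 + \<sigma>X"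
proof -
  note params = rate_constants[OF assms(2,3) a b e]
  define c where "c = sqrt (1 - exp (-2*(R+Rc+P)))"
  have c: "b \<le> c" "c \<le> 1"
    using assms(3,4) unfolding b c_def by auto
  have \<beta>2: "\<beta>2 = \<sigma>X*a*c + \<sigma>X*a*e/b"
    unfolding \<beta>2_def c_def a by (simp add: real_sqrt_mult)
  have "\<sigma>X*a/b = \<sigma>X*a*b + \<sigma>X*a*(1 - b^2)/b"
    using params by (simp add: field_simps power2_eq_square)
  also have "\<dots> = \<sigma>X*a*b + \<sigma>X*a*e/b"
    using params by simp
  also have "\<dots> \<le> \<beta>2"
    unfolding \<beta>2 using c params assms(1) by simp
  finally show "\<sigma>X*a/b \<le> \<beta>2" .
  show "\<beta>2 \<le> \<sigma>X*a*(1 + e/b)"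
    unfolding \<beta>2 using c params assms(1) by (simp add: algebra_simps)
  have "a < 1"
    using assms(2) unfolding a by simp
  then show "\<sigma>X*a*(1 + e/b) < a*e/(\<sigma>X*b) * \<sigma>X^2 + \<sigma>X"
    using params assms(1) by (simp add: field_simps power2_eq_square)
qed

lemma dist_objective_min_at_sigmaP:
  assumes "0 < \<sigma>X" "0 \<le> R" "0 \<le> P"
    and "Dlow \<sigma>X R Rc P = dist_objective \<sigma>X R Rc P (sigmaP \<sigma>X P)"
    and "s \<in> {sigmaP \<sigma>X P .. \<sigma>X}"
  shows "dist_objective \<sigma>X R Rc P (sigmaP \<sigma>X P) \<le> dist_objective \<sigma>X R Rc P s"
proof -
  have "bdd_below (dist_objective \<sigma>X R Rc P ` {sigmaP \<sigma>X P .. \<sigma>X})"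
    using sigmaP_solves_psi(1)[OF assms(1,3)] assms(1,2)
    by (intro bdd_belowI2[of _ 0] dist_objective_nonneg) auto
  from cInf_lower[OF imageI[OF assms(5)] this] show ?thesis
    using assms(4) by (simp add: Dlow_eq_Inf_dist_objective)
qed

lemma sigmaP_lower_bound_if_Dlow_attained:
  assumes "0 < \<sigma>X" "0 < R" "0 \<le> Rc" "0 \<le> P"
    and "Dlow \<sigma>X R Rc P = dist_objective \<sigma>X R Rc P (sigmaP \<sigma>X P)" and "sigmaP \<sigma>X P < \<sigma>X"
    and a: "a = sqrt (1 - exp (-2*R))" and b: "b = sqrt (1 - exp (-2*(R+Rc)))"
    and e: "e = exp (-2*(R+Rc))"
  shows "\<sigma>X*a/b \<le> a*e/(\<sigma>X*b) * (sigmaP \<sigma>X P)^2 + sigmaP \<sigma>X P"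
proof -
  note sP = sigmaP_solves_psi[OF assms(1,4)]
  have "0 \<le> 2 * (a*e/(\<sigma>X*b) * (sigmaP \<sigma>X P)^2 + sigmaP \<sigma>X P - \<sigma>X*a/b)"
    using has_real_derivative_dist_objective[OF assms(1-3) sP(1,3) a b e] assms(6)
    by (rule DERIV_nonneg_at_left_endpoint_min)
       (use dist_objective_min_at_sigmaP assms(1,2,4,5) in auto)
  then show ?thesis by simp
qed

theorem mainTheorem6:
  fixes \<sigma>X R Rc P :: real
  assumes "\<sigma>X > 0" "R > 0" "Rc \<ge> 0" "P \<ge> 0"
  defines "a \<equiv> sqrt (1 - exp (-2*R))"
      and "b \<equiv> sqrt (1 - exp (-2*(R+Rc)))"
      and "e \<equiv> exp (-2*(R+Rc))"
  defines "\<beta>1 \<equiv> a*e / (\<sigma>X*b)"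
      and "\<beta>2' \<equiv> \<sigma>X*a*(1 + e/b)"
      and "\<beta>2 \<equiv> \<sigma>X * sqrt ((1 - exp (-2*R)) * (1 - exp (-2*(R+Rc+P)))) + \<sigma>X*a*e/b"
  defines "vs \<equiv> \<sigma>X * (sqrt (b^2 + 4*a^2*e) - b) / (2*a*e)"
      and "vs' \<equiv> (sqrt (1 + 4*\<beta>1*\<beta>2') - 1) / (2*\<beta>1)"
      and "sig \<equiv> (sqrt (1 + 4*\<beta>1*\<beta>2) - 1) / (2*\<beta>1)"
  shows "vs \<le> sig \<and> sig \<le> vs' \<and> vs' < \<sigma>X \<and>
    (Dlow \<sigma>X R Rc P = \<sigma>X^2 + (sigmaP \<sigma>X P)^2 - 2*\<sigma>X*(sigmaP \<sigma>X P)*xi R Rc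
       \<longrightarrow> sigmaP \<sigma>X P \<ge> vs)"
proof -
  note abe = a_def[THEN meta_eq_to_obj_eq] b_def[THEN meta_eq_to_obj_eq] e_def[THEN meta_eq_to_obj_eq]
  note params = rate_constants[OF assms(2,3) abe]
  note \<beta>2_bounds = beta2_bounds[OF assms(1-4) abe, folded \<beta>2_def \<beta>1_def \<beta>2'_def]
  have \<beta>1: "0 < \<beta>1"
    unfolding \<beta>1_def using params assms(1) by simp
  have vs: "vs = pos_root \<beta>1 (\<sigma>X*a/b)"
    unfolding vs_def \<beta>1_def using params assms(1) by (intro pos_root_eq_quadratic_root)
  have vs_sig: "vs \<le> sig" "sig \<le> vs'"
    unfolding vs sig_def vs'_def pos_root_def[symmetric] using \<beta>1 \<beta>2_bounds by (auto intro: pos_root_mono)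
  have vs'_less: "vs' < \<sigma>X"
    unfolding vs'_def pos_root_def[symmetric] using \<beta>1 \<beta>2_bounds assms(1) pos_root_less_iff by auto
  have "sigmaP \<sigma>X P \<ge> vs"
    if "Dlow \<sigma>X R Rc P = \<sigma>X^2 + (sigmaP \<sigma>X P)^2 - 2*\<sigma>X*(sigmaP \<sigma>X P)*xi R Rc"
  proof (cases "sigmaP \<sigma>X P < \<sigma>X")
    case True
    note sP = sigmaP_solves_psi[OF assms(1,4)]
    have "Dlow \<sigma>X R Rc P = dist_objective \<sigma>X R Rc P (sigmaP \<sigma>X P)"
      unfolding that dist_objective_def xi_def sP(3) by simp
    from sigmaP_lower_bound_if_Dlow_attained[OF assms(1-4) this True abe, folded \<beta>1_def]
    show ?thesis
      unfolding vs using less_pos_root_iff[OF \<beta>1] sP(1) by (meson less_le_not_le linorder_le_less_linear)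
  next
    case False
    then show ?thesis using vs_sig vs'_less by linarith
  qed
  then show ?thesis using vs_sig vs'_less by blast
qed

end
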